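(* For every real $u>0$, $$\sum_{q\ge 1}\frac{\Lambda(q)}{q^{1+u}}=-\frac{\zeta'(1+u)}{\zeta(1+u)}\le\frac{\log 2}{2^u-1}\le\frac{1}{u}.$$
   Context: $\Lambda$ is the von Mangoldt function ($\Lambda(q)=\log p$ if $q=p^j$ for a prime $p$ and $j\ge1$, and $\Lambda(q)=0$ otherwise); $\zeta$ is the Riemann zeta function. *)

theory Defs
  imports "HOL-Analysis.Analysis" "HOL-Number_Theory.Number_Theory"
begin

text \<open>Riemann zeta function on the real half-line s > 1, given by its Dirichlet series
  zeta s = sum over n >= 1 of n^(-s). (Outside s > 1 the value is irrelevant/unspecified.)\<close>
definition real_zeta :: "real \<Rightarrow> real" where
  "real_zeta s = (\<Sum>n. 1 / real (Suc n) powr s)"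

end

theory Submission
  imports Defs
begin

(* Put G = zeta s and L = - zeta' s = sum of ln n / n^s, with s = 1 + u. Since ln is the
   Dirichlet convolution of Lambda with the constant 1, the Dirichlet series of Lambda is L / G.
   For the bound, compare L with the sum E of its even-indexed terms, which equals
   2^-s (ln 2 * G + L). The terms ln n / n^s decrease from n = 3 on, and
   ln 3 / 3^s + ln 5 / 5^s <= ln 2 / 2^s + ln 4 / 4^s, so the odd-indexed terms sum to at most E,
   i.e. L <= 2 E, which rearranges to L (2^u - 1) <= ln 2 * G. Finally 2^u - 1 >= u ln 2. *)

(* The hypotheses f 0 = 0 and g 0 = 0 are needed: the fibre of 0 under multiplication is
   infinite, whereas the divisor sum over {d. d dvd 0} is the junk value 0. *)
lemma sums_dirichlet_prod_nonneg:
  fixes f g :: "nat \<Rightarrow> real"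
  assumes "\<And>n. 0 \<le> f n" "\<And>n. 0 \<le> g n" "f 0 = 0" "g 0 = 0"
    and "f sums A" "g sums B"
  shows "(\<lambda>n. \<Sum>d | d dvd n. f d * g (n div d)) sums (A * B)"
proof -
  define k where "k = (\<lambda>(d, m). f d * g m)"
  have f: "(f has_sum A) UNIV" and g: "(g has_sum B) UNIV"
    using assms by (auto intro: sums_nonneg_imp_has_sum)
  have rows: "((\<lambda>m. k (d, m)) has_sum f d * B) UNIV" for d
    unfolding k_def using has_sum_cmult_right[OF g] by simp
  have cols: "((\<lambda>d. f d * B) has_sum A * B) UNIV"
    using has_sum_cmult_left[OF f] by simp
  have "(k has_sum A * B) (UNIV \<times> UNIV)"
  proof (rule has_sum_SigmaI[OF rows cols])
    show "k summable_on UNIV \<times> UNIV"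
      using rows cols assms(1,2) by (intro summable_on_SigmaI) (auto simp: k_def summable_on_def)
  qed
  moreover have "bij_betw snd (SIGMA n:UNIV. {(d, m). d * m = n}) (UNIV \<times> UNIV)"
    by (rule bij_betwI') auto
  ultimately have "((\<lambda>x. k (snd x)) has_sum A * B) (SIGMA n:UNIV. {(d, m). d * m = n})"
    using has_sum_reindex_bij_betw by blast
  moreover have "((\<lambda>p. k (snd (n, p))) has_sum (\<Sum>d | d dvd n. f d * g (n div d)))
                   {(d, m). d * m = n}" for n
  proof (cases "n = 0")
    case True
    have "infinite {d::nat. d dvd 0}" by (simp add: infinite_UNIV_nat)
    then show ?thesis using True assms(3,4) by (auto intro!: has_sum_0 simp: k_def)
  next
    case False
    have "((\<lambda>d. f d * g (n div d)) has_sum (\<Sum>d | d dvd n. f d * g (n div d)))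
            {d. d dvd n}"
      by (rule has_sum_finiteI) (use False in auto)
    also have "?this \<longleftrightarrow> ?thesis"
      by (rule has_sum_reindex_bij_witness[where i = fst and j = "\<lambda>d. (d, n div d)"])
         (use False in \<open>auto simp: k_def\<close>)
    finally show ?thesis .
  qed
  ultimately have "((\<lambda>n. \<Sum>d | d dvd n. f d * g (n div d)) has_sum A * B) UNIV"
    by (rule has_sum_SigmaD)
  then show ?thesis by (rule has_sum_imp_sums)
qed

lemma sums_le_twice_sums_even:
  fixes h :: "nat \<Rightarrow> real"
  assumes "h sums L" "(\<lambda>k. h (2 * k)) sums E"
    and "\<And>k. N \<le> k \<Longrightarrow> h (2 * k + 1) \<le> h (2 * k)"
    and "(\<Sum>k<N. h (2 * k + 1)) \<le> (\<Sum>k<N. h (2 * k))"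
  shows "L \<le> 2 * E"
proof -
  define b where "b k = h (2 * k) - h (2 * k + 1)" for k
  have "(\<lambda>k. h (2 * k) + h (2 * k + 1)) sums L"
    using sums_group[OF assms(1), of 2] by (simp add: mult.commute)
  then have "(\<lambda>k. 2 * h (2 * k) - (h (2 * k) + h (2 * k + 1))) sums (2 * E - L)"
    by (intro sums_diff sums_mult assms(2))
  then have "b sums (2 * E - L)" by (simp add: b_def [abs_def])
  then have "summable b" and "2 * E - L = suminf b" by (auto simp: sums_iff)
  moreover have "suminf b = (\<Sum>k. b (k + N)) + (\<Sum>k<N. b k)"
    by (rule suminf_split_initial_segment[OF \<open>summable b\<close>])
  moreover have "0 \<le> b (k + N)" for k using assms(3)[of "k + N"] by (simp add: b_def)
  then have "0 \<le> (\<Sum>k. b (k + N))"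
    by (rule suminf_nonneg[OF summable_ignore_initial_segment[OF \<open>summable b\<close>]])
  moreover have "0 \<le> (\<Sum>k<N. b k)" using assms(4) by (simp add: b_def sum_subtractf)
  ultimately show ?thesis by linarith
qed

lemma two_div_le_inverse_add_inverse:
  fixes a b c :: real
  assumes "0 < a" "0 < b" "0 < c" "a * b \<le> c\<^sup>2"
  shows "2 / c \<le> 1 / a + 1 / b"
proof -
  have "4 * (a * b) \<le> (a + b)\<^sup>2"
    unfolding power2_sum using sum_squares_bound[of a b] by linarith
  from mult_mono[OF this assms(4) zero_le_power2] assms(1,2)
  have "(2 * (a * b))\<^sup>2 \<le> ((a + b) * c)\<^sup>2"
    by (simp add: power2_eq_square power_mult_distrib algebra_simps)
  then have "2 * (a * b) \<le> (a + b) * c"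
    by (rule power2_le_imp_le) (use assms in simp)
  then have "2 \<le> (a + b) * c / (a * b)"
    using assms by (simp add: pos_le_divide_eq)
  also have "\<dots> = (1 / a + 1 / b) * c"
    using assms by (simp add: field_simps)
  finally show ?thesis
    using assms by (simp add: pos_divide_le_eq)
qed

lemma has_field_derivative_inverse_powr:
  fixes a :: real
  assumes "0 < a"
  shows "((\<lambda>x. 1 / a powr x) has_field_derivative - ln a / a powr x) (at x within S)"
proof -
  have "(\<lambda>x. 1 / a powr x) = (\<lambda>x. exp (- (x * ln a)))"
    using assms by (simp add: powr_def exp_minus divide_inverse)
  then show ?thesis
    using assms by (auto intro!: derivative_eq_intros simp: powr_def exp_minus field_simps)
qed

lemma ln_div_powr_antimono:
  fixes x y s :: real
  assumes "exp 1 \<le> x" "x \<le> y" "1 \<le> s"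
  shows "ln y / y powr s \<le> ln x / x powr s"
proof -
  have "1 \<le> x" using assms(1) exp_ge_add_one_self[of 1] by linarith
  have "ln y / y powr s = (ln y / y) / y powr (s - 1)"
    using \<open>1 \<le> x\<close> assms(2) by (simp add: powr_diff)
  also have "\<dots> \<le> (ln x / x) / x powr (s - 1)"
    by (rule frac_le)
       (use assms \<open>1 \<le> x\<close> ln_x_over_x_mono[OF assms(1,2)] in
         \<open>auto intro: powr_mono2\<close>)
  also have "\<dots> = ln x / x powr s"
    using \<open>1 \<le> x\<close> by (simp add: powr_diff)
  finally show ?thesis .
qed

lemma summable_inverse_real_powr:
  assumes "1 < s"
  shows "summable (\<lambda>n. 1 / real n powr s)"
  using summable_real_powr_iff[of "-s"] assms by (simp add: powr_minus divide_inverse)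

lemma summable_ln_div_real_powr:
  assumes "1 < s"
  shows "summable (\<lambda>n. ln (real n) / real n powr s)"
proof -
  define e where "e = (s - 1) / 2"
  have e: "0 < e" "1 < s - e" using assms by (simp_all add: e_def field_simps)
  have "norm (ln (real n) / real n powr s) \<le> 1 / e * (1 / real n powr (s - e))" for n
  proof (cases "n = 0")
    case False
    then have "ln (real n) \<le> real n powr e / e" by (intro ln_powr_bound) (use e in auto)
    then have "ln (real n) / real n powr s \<le> real n powr e / e / real n powr s"
      by (intro divide_right_mono) auto
    then show ?thesis using False by (simp add: powr_diff)
  qed simp
  moreover have "summable (\<lambda>n. 1 / e * (1 / real n powr (s - e)))"
    by (intro summable_mult summable_inverse_real_powr e)
  ultimately show ?thesis by (rule summable_comparison_test'[rotated])
qed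

lemma sums_real_zeta:
  assumes "1 < s"
  shows "(\<lambda>n. 1 / real n powr s) sums real_zeta s"
proof -
  have "summable (\<lambda>n. 1 / real (Suc n) powr s)"
    using summable_inverse_real_powr[OF assms] by (subst summable_Suc_iff)
  then have "(\<lambda>n. 1 / real (Suc n) powr s) sums real_zeta s"
    unfolding real_zeta_def by (rule summable_sums)
  then show ?thesis using sums_Suc_iff[of "\<lambda>n. 1 / real n powr s"] by simp
qed

lemma real_zeta_ge_one:
  assumes "1 < s"
  shows "1 \<le> real_zeta s"
proof -
  have "(\<Sum>n<2. 1 / real n powr s) \<le> (\<Sum>n. 1 / real n powr s)"
    using sums_real_zeta[OF assms] by (intro sum_le_suminf) (auto simp: sums_iff)
  also have "\<dots> = real_zeta s"
    using sums_real_zeta[OF assms] by (simp add: sums_iff)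
  finally show ?thesis by (simp add: numeral_2_eq_2)
qed

lemma real_zeta_has_field_derivative:
  assumes "1 < s"
  shows "(real_zeta has_field_derivative (\<Sum>n. - ln (real (Suc n)) / real (Suc n) powr s))
           (at s)"
proof -
  define a where "a = (1 + s) / 2"
  have a: "1 < a" "a < s" using assms by (auto simp: a_def)
  have "uniformly_convergent_on {a..}
          (\<lambda>n x. \<Sum>i<n. - ln (real (Suc i)) / real (Suc i) powr x)"
  proof (rule Weierstrass_m_test')
    show "summable (\<lambda>n. ln (real (Suc n)) / real (Suc n) powr a)"
      using summable_ln_div_real_powr[OF \<open>1 < a\<close>]
        summable_Suc_iff[of "\<lambda>n. ln (real n) / real n powr a"] by simp
    fix n x assume "x \<in> {a..}"
    then have "real (Suc n) powr a \<le> real (Suc n) powr x" by (intro powr_mono) auto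
    then show "norm (- ln (real (Suc n)) / real (Suc n) powr x)
                 \<le> ln (real (Suc n)) / real (Suc n) powr a"
      by (auto intro: divide_left_mono)
  qed
  then have "((\<lambda>x. \<Sum>n. 1 / real (Suc n) powr x) has_field_derivative
               (\<Sum>n. - ln (real (Suc n)) / real (Suc n) powr s)) (at s)"
    using a summable_inverse_real_powr[OF \<open>1 < a\<close>]
      summable_Suc_iff[of "\<lambda>n. 1 / real n powr a"]
    by (intro has_field_derivative_series'(2)[OF convex_real_interval(1)
          has_field_derivative_inverse_powr, of a]) auto
  then show ?thesis by (simp add: real_zeta_def [abs_def])
qed

lemma neg_deriv_real_zeta_sums:
  assumes "1 < s"
  shows "(\<lambda>n. ln (real n) / real n powr s) sums (- deriv real_zeta s)"
proof -
  have "summable (\<lambda>n. ln (real (Suc n)) / real (Suc n) powr s)"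
    using summable_ln_div_real_powr[OF assms]
      summable_Suc_iff[of "\<lambda>n. ln (real n) / real n powr s"] by simp
  moreover from this have "deriv real_zeta s = - (\<Sum>n. ln (real (Suc n)) / real (Suc n) powr s)"
    using DERIV_imp_deriv[OF real_zeta_has_field_derivative[OF assms]] suminf_minus by simp
  ultimately have "(\<lambda>n. ln (real (Suc n)) / real (Suc n) powr s) sums (- deriv real_zeta s)"
    by (simp add: summable_sums)
  then show ?thesis using sums_Suc_iff[of "\<lambda>n. ln (real n) / real n powr s"] by simp
qed

lemma mangoldt_dirichlet_series_sums:
  assumes "1 < s"
  shows "(\<lambda>n. mangoldt n / real n powr s) sums (- deriv real_zeta s / real_zeta s)"
proof -
  define f where "f n = mangoldt n / real n powr s" for n
  define g where "g n = 1 / real n powr s" for n :: nat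
  have "summable f"
  proof (rule summable_comparison_test'[OF summable_ln_div_real_powr[OF assms]])
    show "norm (f n) \<le> ln (real n) / real n powr s" for n
      using mangoldt_le[of n]
      by (cases "n = 0") (auto simp: f_def mangoldt_nonneg divide_right_mono)
  qed
  have "(\<Sum>d | d dvd n. f d * g (n div d)) = ln (real n) / real n powr s" for n
  proof (cases "n = 0")
    case False
    have "f d * g (n div d) = mangoldt d / real n powr s" if "d dvd n" for d
    proof -
      have "real n = real d * real (n div d)"
        using that by (metis dvd_mult_div_cancel of_nat_mult)
      then have "real n powr s = real d powr s * real (n div d) powr s" by (simp add: powr_mult)
      then show ?thesis by (simp add: f_def g_def)
    qed
    then have "(\<Sum>d | d dvd n. f d * g (n div d)) =
                 (\<Sum>d | d dvd n. mangoldt d) / real n powr s"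
      by (simp add: sum_divide_distrib)
    also have "\<dots> = ln (real n) / real n powr s"
      using mangoldt_sum[OF False, where 'a = real] by simp
    finally show ?thesis .
  qed (simp add: infinite_UNIV_nat)
  moreover have "(\<lambda>n. \<Sum>d | d dvd n. f d * g (n div d)) sums (suminf f * real_zeta s)"
    using summable_sums[OF \<open>summable f\<close>] sums_real_zeta[OF assms]
    by (intro sums_dirichlet_prod_nonneg)
       (auto simp: f_def [abs_def] g_def [abs_def] mangoldt_nonneg)
  ultimately have "suminf f * real_zeta s = - deriv real_zeta s"
    using neg_deriv_real_zeta_sums[OF assms] sums_unique2 by simp
  then have "suminf f = - deriv real_zeta s / real_zeta s"
    using real_zeta_ge_one[OF assms] by (simp add: field_simps)
  then show ?thesis using summable_sums[OF \<open>summable f\<close>] by (simp add: f_def [abs_def])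
qed

lemma ln_div_powr_3_5_le_2_4:
  fixes s :: real
  assumes "1 \<le> s"
  shows "ln 3 / 3 powr s + ln 5 / 5 powr s \<le> ln 2 / 2 powr s + ln 4 / 4 powr s"
proof -
  define t where "t = s - 1"
  have "0 \<le> t" using assms by (simp add: t_def)
  have powr_s: "x powr s = x * x powr t" if "0 < x" for x :: real
    using that by (simp add: t_def powr_diff)
  have ln_3_5: "ln 3 / 3 + ln 5 / 5 \<le> ln (2::real)"
  proof -
    have "ln (243::real) = 5 * ln 3" "ln (125::real) = 3 * ln 5" "ln (32768::real) = 15 * ln 2"
      using ln_realpow[of 3 5] ln_realpow[of 5 3] ln_realpow[of 2 15] by simp_all
    moreover have "ln (243::real) + ln 125 \<le> ln 32768"
      using ln_mult[of 243 125] ln_le_cancel_iff[of 30375 32768] by simp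
    ultimately show ?thesis by simp
  qed
  have "2 powr t * 4 powr t = 8 powr t" by (simp add: powr_mult [symmetric])
  also have "\<dots> \<le> 9 powr t" using \<open>0 \<le> t\<close> by (intro powr_mono2) auto
  also have "\<dots> = (3 powr t)\<^sup>2" by (simp add: power2_eq_square powr_mult [symmetric])
  finally have geo: "2 / 3 powr t \<le> 1 / 2 powr t + 1 / 4 powr t"
    by (rule two_div_le_inverse_add_inverse[rotated 3]) auto
  have "ln 5 / 5 powr s \<le> ln 5 / 5 / 3 powr t"
    using \<open>0 \<le> t\<close> by (simp add: powr_s frac_le powr_mono2)
  then have "ln 3 / 3 powr s + ln 5 / 5 powr s \<le> (ln 3 / 3 + ln 5 / 5) / 3 powr t"
    by (simp add: powr_s add_divide_distrib)
  also have "\<dots> \<le> ln 2 / 2 * (2 / 3 powr t)"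
    using ln_3_5 by (simp add: divide_right_mono)
  also have "\<dots> \<le> ln 2 / 2 * (1 / 2 powr t + 1 / 4 powr t)"
    using geo by (intro mult_left_mono) auto
  also have "\<dots> = ln 2 / 2 powr s + ln 4 / 4 powr s"
    using ln_realpow[of 2 2] by (simp add: powr_s field_simps)
  finally show ?thesis .
qed

lemma ln_div_powr_even_sums:
  assumes "1 < s"
  shows "(\<lambda>k. ln (real (2 * k)) / real (2 * k) powr s) sums
           (2 powr - s * (ln 2 * real_zeta s - deriv real_zeta s))"
proof -
  have "ln (real (2 * k)) / real (2 * k) powr s =
          2 powr - s * (ln 2 * (1 / real k powr s) + ln (real k) / real k powr s)" for k
    by (cases "k = 0") (simp_all add: ln_mult powr_mult powr_minus field_simps)
  moreover have "(\<lambda>k. 2 powr - s * (ln 2 * (1 / real k powr s) + ln (real k) / real k powr s))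
                   sums (2 powr - s * (ln 2 * real_zeta s + - deriv real_zeta s))"
    by (intro sums_mult sums_add sums_real_zeta[OF assms] neg_deriv_real_zeta_sums[OF assms])
  ultimately show ?thesis by simp
qed

lemma neg_deriv_real_zeta_le:
  assumes "1 < s"
  shows "- deriv real_zeta s * (2 powr (s - 1) - 1) \<le> ln 2 * real_zeta s"
proof -
  define h where "h n = ln (real n) / real n powr s" for n
  have "- deriv real_zeta s \<le> 2 * (2 powr - s * (ln 2 * real_zeta s - deriv real_zeta s))"
  proof (rule sums_le_twice_sums_even[where N = 3])
    show "(\<lambda>n. h n) sums - deriv real_zeta s"
      using neg_deriv_real_zeta_sums[OF assms] by (simp add: h_def)
    show "(\<lambda>k. h (2 * k)) sums (2 powr - s * (ln 2 * real_zeta s - deriv real_zeta s))"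
      using ln_div_powr_even_sums[OF assms] by (simp add: h_def)
    show "h (2 * k + 1) \<le> h (2 * k)" if "3 \<le> k" for k
    proof -
      have "exp 1 \<le> (3::real)" using exp_le by simp
      then show ?thesis unfolding h_def
        using that assms by (intro ln_div_powr_antimono) auto
    qed
    show "(\<Sum>k<3. h (2 * k + 1)) \<le> (\<Sum>k<3. h (2 * k))"
      using ln_div_powr_3_5_le_2_4[of s] assms by (simp add: h_def numeral_3_eq_3)
  qed
  then have "2 powr s * - deriv real_zeta s \<le> 2 * (ln 2 * real_zeta s - deriv real_zeta s)"
    by (simp add: powr_minus field_simps)
  then show ?thesis by (simp add: powr_diff field_simps)
qed

theorem lemma3p2:
  fixes u :: real
  assumes "u > 0"
  shows "(\<lambda>q. mangoldt (Suc q) / real (Suc q) powr (1 + u)) sums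
           (- deriv real_zeta (1 + u) / real_zeta (1 + u))
       \<and> - deriv real_zeta (1 + u) / real_zeta (1 + u) \<le> ln 2 / (2 powr u - 1)
       \<and> ln 2 / (2 powr u - 1) \<le> 1 / u"
proof (intro conjI)
  have "1 < 1 + u" using assms by simp
  show "(\<lambda>q. mangoldt (Suc q) / real (Suc q) powr (1 + u)) sums
          (- deriv real_zeta (1 + u) / real_zeta (1 + u))"
    using mangoldt_dirichlet_series_sums[OF \<open>1 < 1 + u\<close>]
      sums_Suc_iff[of "\<lambda>n. mangoldt n / real n powr (1 + u)"] by simp
  have "2 powr u = exp (u * ln 2)" by (simp add: powr_def)
  then have "u * ln 2 \<le> 2 powr u - 1"
    using exp_ge_add_one_self[of "u * ln 2"] by linarith
  moreover have "0 < u * ln 2" using assms by simp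
  ultimately show "ln 2 / (2 powr u - 1) \<le> 1 / u"
    using frac_le[of "ln 2" "ln 2" "u * ln 2" "2 powr u - 1"] by simp
  show "- deriv real_zeta (1 + u) / real_zeta (1 + u) \<le> ln 2 / (2 powr u - 1)"
    using neg_deriv_real_zeta_le[OF \<open>1 < 1 + u\<close>] real_zeta_ge_one[OF \<open>1 < 1 + u\<close>]
      \<open>u * ln 2 \<le> 2 powr u - 1\<close> \<open>0 < u * ln 2\<close>
    by (simp add: divide_simps mult.commute)
qed

end
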